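(* Let $\mathcal{F}=\{f_i\}_{i=1}^n$ be a basis for $\mathbb{R}^n$ and let $k$ be a positive integer. Then there exists a $k$-dimensional maximal $\mathcal{F}$-PR subspace if and only if $1\le k\le[(n+1)/2]$, where $[a]$ denotes the integer part of $a$.
   Context: A finite sequence $\{g_i\}$ in a subspace $M\subseteq\mathbb{R}^n$ is a phase-retrievable frame for $M$ if it spans $M$ and whenever $x,y\in M$ satisfy $|\langle x,g_i\rangle|=|\langle y,g_i\rangle|$ for all $i$, then $x=\pm y$. For a finite sequence $\mathcal{F}=\{f_i\}_{i=1}^N$ spanning $\mathbb{R}^n$, a subspace $M$ is an $\mathcal{F}$-PR subspace (phase-retrievable subspace with respect to $\mathcal{F}$) if $\{P_Mf_i\}_{i=1}^N$ is a phase-retrievable frame for $M$, where $P_M$ is the orthogonal projection onto $M$. An $\mathcal{F}$-PR subspace is maximal if it is not a proper subspace of another $\mathcal{F}$-PR subspace. *)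

theory Defs
  imports "HOL-Analysis.Analysis"
begin

definition orth_proj :: "'a::euclidean_space set \<Rightarrow> 'a \<Rightarrow> 'a" where
  "orth_proj M x = (THE y. y \<in> M \<and> (\<forall>z\<in>M. inner (x - y) z = 0))"

definition PR_frame :: "'a::euclidean_space set \<Rightarrow> ('i \<Rightarrow> 'a) \<Rightarrow> 'i set \<Rightarrow> bool" where
  "PR_frame M g I \<longleftrightarrow> finite I \<and> span (g ` I) = M \<and>
     (\<forall>x\<in>M. \<forall>y\<in>M. (\<forall>i\<in>I. \<bar>inner x (g i)\<bar> = \<bar>inner y (g i)\<bar>) \<longrightarrow> x = y \<or> x = - y)"

definition F_PR_subspace :: "('i \<Rightarrow> 'a::euclidean_space) \<Rightarrow> 'i set \<Rightarrow> 'a set \<Rightarrow> bool" where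
  "F_PR_subspace f I M \<longleftrightarrow> subspace M \<and> PR_frame M (\<lambda>i. orth_proj M (f i)) I"

definition maximal_F_PR_subspace :: "('i \<Rightarrow> 'a::euclidean_space) \<Rightarrow> 'i set \<Rightarrow> 'a set \<Rightarrow> bool" where
  "maximal_F_PR_subspace f I M \<longleftrightarrow> F_PR_subspace f I M \<and>
     \<not> (\<exists>M'. F_PR_subspace f I M' \<and> M \<subset> M')"

end

theory Submission
  imports Defs
begin

text \<open>M is an F-PR subspace exactly when no two nonzero vectors of M have frame coefficients
  \<open>\<langle>x, f i\<rangle>\<close> with disjoint supports. If dim M = k and 2k \<ge> n + 2, split the indices into
  sets of sizes k - 1 and n - k + 1, both smaller than k: on each of them the coefficients of some
  nonzero vector of M vanish, and these two vectors form such a pair. Conversely, for 2k \<le> n + 1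
  fix 2k - 1 indices S and distinct nodes t i, and let M consist of the vectors whose coefficients vanish off S
  and are the values p (t i) of a polynomial p of degree < k on S. Then dim M = k, a nonzero vector
  of M has at most k - 1 vanishing coefficients on S, so M is PR; and a strictly larger subspace
  contains a nonzero vector vanishing on k indices of S, disjointly supported from a vector of M
  vanishing on the other k - 1.\<close>

definition disjoint_support_pair :: "('i \<Rightarrow> 'a::real_inner) \<Rightarrow> 'a set \<Rightarrow> bool" where
  "disjoint_support_pair f M \<longleftrightarrow>
     (\<exists>a\<in>M. \<exists>b\<in>M. a \<noteq> 0 \<and> b \<noteq> 0 \<and> (\<forall>i. inner a (f i) * inner b (f i) = 0))"

lemma orth_proj_unique:
  fixes M :: "'a::euclidean_space set"
  assumes M: "subspace M" and y: "y \<in> M" and perp: "\<forall>z\<in>M. inner (x - y) z = 0"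
  shows "orth_proj M x = y"
  unfolding orth_proj_def
proof (rule the_equality)
  show "y \<in> M \<and> (\<forall>z\<in>M. inner (x - y) z = 0)" using y perp ..
next
  fix y' assume y': "y' \<in> M \<and> (\<forall>z\<in>M. inner (x - y') z = 0)"
  have "y - y' \<in> M" using M y y' by (simp add: subspace_diff)
  then have "inner (y - y') (y - y') = inner (x - y') (y - y') - inner (x - y) (y - y')"
    and "inner (x - y') (y - y') = 0" "inner (x - y) (y - y') = 0"
    using perp y' by (auto simp: inner_diff_left)
  then show "y' = y" by simp
qed

lemma orth_proj:
  fixes M :: "'a::euclidean_space set"
  assumes M: "subspace M"
  shows "orth_proj M x \<in> M" and "\<forall>z\<in>M. inner (x - orth_proj M x) z = 0"
proof -
  obtain y z where y: "y \<in> span M" and z: "\<And>w. w \<in> span M \<Longrightarrow> orthogonal z w"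
    and x: "x = y + z" using orthogonal_subspace_decomp_exists[of M x] by blast
  have "y \<in> M" using y M span_eq_iff by blast
  moreover have "\<forall>w\<in>M. inner (x - y) w = 0" using z x by (auto simp: orthogonal_def span_base)
  ultimately have "orth_proj M x = y" by (rule orth_proj_unique[OF M])
  with \<open>y \<in> M\<close> \<open>\<forall>w\<in>M. inner (x - y) w = 0\<close>
  show "orth_proj M x \<in> M" and "\<forall>z\<in>M. inner (x - orth_proj M x) z = 0" by simp_all
qed

lemma inner_orth_proj:
  fixes M :: "'a::euclidean_space set"
  assumes "subspace M" "x \<in> M"
  shows "inner x (orth_proj M v) = inner x v"
proof -
  have "inner x (v - orth_proj M v) = 0"
    using orth_proj(2)[OF assms(1)] assms(2) by (simp add: inner_commute)
  then show ?thesis by (simp add: inner_diff_right)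
qed

lemma orthogonal_spanning_family_eq_0:
  fixes f :: "'i \<Rightarrow> 'a::real_inner"
  assumes "span (range f) = UNIV" "\<And>i. inner x (f i) = 0"
  shows "x = 0"
proof -
  have "orthogonal x x"
    by (rule orthogonal_to_span[of x "range f"]) (use assms in \<open>auto simp: orthogonal_def\<close>)
  then show ?thesis by (simp add: orthogonal_def)
qed

lemma exists_nonzero_vanishing_on:
  fixes f :: "'i \<Rightarrow> 'a::euclidean_space"
  assumes M: "subspace M" and A: "finite A" "card A < dim M"
  obtains x where "x \<in> M" "x \<noteq> 0" "\<And>i. i \<in> A \<Longrightarrow> inner x (f i) = 0"
proof -
  let ?P = "(\<lambda>i. orth_proj M (f i)) ` A"
  have "dim (span ?P) \<le> card ?P" by (rule dim_le_card) (simp_all add: A(1))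
  with card_image_le[OF A(1)] have "dim (span ?P) \<le> card A" by (rule le_trans[rotated])
  moreover have "span ?P \<subseteq> M" by (rule span_minimal) (use M orth_proj(1)[OF M] in auto)
  ultimately have "span ?P \<subset> span M"
    using A(2) M span_eq_iff[of M] by (metis dual_order.order_iff_strict leD)
  then obtain x where x: "x \<noteq> 0" "x \<in> span M" and perp: "\<And>y. y \<in> span ?P \<Longrightarrow> orthogonal x y"
    using orthogonal_to_subspace_exists_gen by blast
  have "x \<in> M" using x M span_eq_iff by blast
  moreover have "inner x (f i) = 0" if "i \<in> A" for i
    using perp[of "orth_proj M (f i)"] that inner_orth_proj[OF M \<open>x \<in> M\<close>]
    by (simp add: span_base orthogonal_def)
  ultimately show ?thesis using that x by blast
qed

lemma span_orth_proj_image: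
  fixes f :: "'i \<Rightarrow> 'a::euclidean_space"
  assumes f: "span (range f) = UNIV" and M: "subspace M"
  shows "span (range (\<lambda>i. orth_proj M (f i))) = M"
proof (rule ccontr)
  let ?P = "range (\<lambda>i. orth_proj M (f i))"
  assume "span ?P \<noteq> M"
  moreover have "span ?P \<subseteq> M" by (rule span_minimal) (use M orth_proj(1)[OF M] in auto)
  ultimately have "span ?P \<subset> span M" using M span_eq_iff[of M] by blast
  then obtain x where x: "x \<noteq> 0" "x \<in> span M" and perp: "\<And>y. y \<in> span ?P \<Longrightarrow> orthogonal x y"
    using orthogonal_to_subspace_exists_gen by blast
  have "x \<in> M" using x M span_eq_iff by blast
  then have "inner x (f i) = 0" for i
    using perp[of "orth_proj M (f i)"] inner_orth_proj[OF M] by (simp add: span_base orthogonal_def)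
  then show False using orthogonal_spanning_family_eq_0[OF f] x by blast
qed

text \<open>The pairs correspond via (a, b) = (x + y, x - y): the coefficients of x and y have equal
  moduli exactly when those of x + y and x - y have product zero.\<close>

lemma phase_retrievable_iff_not_disjoint_support_pair:
  fixes f :: "'i \<Rightarrow> 'a::real_inner"
  assumes M: "subspace M"
  shows "(\<forall>x\<in>M. \<forall>y\<in>M. (\<forall>i. \<bar>inner x (f i)\<bar> = \<bar>inner y (f i)\<bar>) \<longrightarrow> x = y \<or> x = - y)
    \<longleftrightarrow> \<not> disjoint_support_pair f M"
  unfolding disjoint_support_pair_def
proof safe
  fix a b assume retr: "\<forall>x\<in>M. \<forall>y\<in>M. (\<forall>i. \<bar>inner x (f i)\<bar> = \<bar>inner y (f i)\<bar>) \<longrightarrow> x = y \<or> x = - y"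
    and a: "a \<in> M" "a \<noteq> 0" and b: "b \<in> M" "b \<noteq> 0" and disj: "\<forall>i. inner a (f i) * inner b (f i) = 0"
  have "\<bar>inner (a + b) (f i)\<bar> = \<bar>inner (a - b) (f i)\<bar>" for i
    using disj[rule_format, of i] by (auto simp: inner_add_left inner_diff_left)
  then have "a + b = a - b \<or> a + b = - (a - b)"
    using retr a b M by (meson subspace_add subspace_diff)
  then have "2 *\<^sub>R b = 0 \<or> 2 *\<^sub>R a = 0" by (auto simp: algebra_simps scaleR_2)
  then show False using a b by simp
next
  fix x y assume no_pair: "\<not> (\<exists>a\<in>M. \<exists>b\<in>M. a \<noteq> 0 \<and> b \<noteq> 0 \<and> (\<forall>i. inner a (f i) * inner b (f i) = 0))"
    and x: "x \<in> M" and y: "y \<in> M" and eq: "\<forall>i. \<bar>inner x (f i)\<bar> = \<bar>inner y (f i)\<bar>" and "x \<noteq> - y"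
  have "inner (x + y) (f i) * inner (x - y) (f i) = 0" for i
  proof -
    have "(inner x (f i))\<^sup>2 = (inner y (f i))\<^sup>2" using eq by (metis power2_abs)
    then show ?thesis by (simp add: inner_add_left inner_diff_left algebra_simps power2_eq_square)
  qed
  moreover have "x + y \<noteq> 0" using \<open>x \<noteq> - y\<close> by (metis eq_neg_iff_add_eq_0)
  ultimately have "x - y = 0" using no_pair x y M by (meson subspace_add subspace_diff)
  then show "x = y" by simp
qed

lemma F_PR_subspace_iff:
  fixes f :: "'i::finite \<Rightarrow> 'a::euclidean_space"
  assumes f: "span (range f) = UNIV" and M: "subspace M"
  shows "F_PR_subspace f UNIV M \<longleftrightarrow> \<not> disjoint_support_pair f M"
  unfolding F_PR_subspace_def PR_frame_def
  using M span_orth_proj_image[OF f M] phase_retrievable_iff_not_disjoint_support_pair[OF M]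
  by (simp add: inner_orth_proj[OF M])

lemma dim_le_if_not_disjoint_support_pair:
  fixes f :: "'i::finite \<Rightarrow> 'a::euclidean_space"
  assumes M: "subspace M" and no_pair: "\<not> disjoint_support_pair f M"
  shows "2 * dim M \<le> CARD('i) + 1"
proof (rule ccontr)
  assume big: "\<not> 2 * dim M \<le> CARD('i) + 1"
  obtain A :: "'i set" where A: "card A = min (dim M - 1) CARD('i)"
    using obtain_subset_with_card_n[of "min (dim M - 1) CARD('i)" "UNIV :: 'i set"] by auto
  have "card A < dim M" using A big by (simp add: min_def) linarith
  then obtain a where a: "a \<in> M" "a \<noteq> 0" "\<And>i. i \<in> A \<Longrightarrow> inner a (f i) = 0"
    using exists_nonzero_vanishing_on[OF M finite] by blast
  have "card (UNIV - A) < dim M" using A big by (simp add: card_Diff_subset min_def) linarith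
  then obtain b where b: "b \<in> M" "b \<noteq> 0" "\<And>i. i \<in> UNIV - A \<Longrightarrow> inner b (f i) = 0"
    using exists_nonzero_vanishing_on[OF M finite] by blast
  have "inner a (f i) * inner b (f i) = 0" for i using a b by (cases "i \<in> A") auto
  then show False using no_pair a b unfolding disjoint_support_pair_def by blast
qed

lemma not_disjoint_support_pair_if_few_zeros:
  assumes few: "\<And>x. x \<in> M \<Longrightarrow> x \<noteq> 0 \<Longrightarrow> 2 * card {i\<in>S. inner x (f i) = 0} < card S"
  shows "\<not> disjoint_support_pair f M"
proof
  assume "disjoint_support_pair f M"
  then obtain a b where a: "a \<in> M" "a \<noteq> 0" and b: "b \<in> M" "b \<noteq> 0"
    and disj: "\<And>i. inner a (f i) * inner b (f i) = 0" unfolding disjoint_support_pair_def by blast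
  have "S = {i\<in>S. inner a (f i) = 0} \<union> {i\<in>S. inner b (f i) = 0}" using disj by auto
  then have "card S \<le> card {i\<in>S. inner a (f i) = 0} + card {i\<in>S. inner b (f i) = 0}"
    by (metis card_Un_le)
  then show False using few[OF a] few[OF b] by linarith
qed

lemma maximal_F_PR_subspace_if_supported_on:
  fixes f :: "'i::finite \<Rightarrow> 'a::euclidean_space"
  assumes f: "span (range f) = UNIV" and PR: "F_PR_subspace f UNIV M"
    and supp: "\<And>x i. x \<in> M \<Longrightarrow> i \<notin> S \<Longrightarrow> inner x (f i) = 0"
    and dim: "dim M \<le> card S" "card S < 2 * dim M"
  shows "maximal_F_PR_subspace f UNIV M"
  unfolding maximal_F_PR_subspace_def
proof (intro conjI PR notI, elim exE conjE)
  fix M' assume PR': "F_PR_subspace f UNIV M'" and "M \<subset> M'"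
  have M: "subspace M" and M': "subspace M'" using PR PR' by (simp_all add: F_PR_subspace_def)
  with \<open>M \<subset> M'\<close> have "dim M < dim M'" by (metis dim_psubset span_eq_iff)
  obtain C where C: "C \<subseteq> S" "card C = dim M"
    using obtain_subset_with_card_n[OF dim(1)] by blast
  have "card C < dim M'" using C(2) \<open>dim M < dim M'\<close> by simp
  then obtain u where u: "u \<in> M'" "u \<noteq> 0" "\<And>i. i \<in> C \<Longrightarrow> inner u (f i) = 0"
    using exists_nonzero_vanishing_on[OF M' finite] by blast
  have "card (S - C) < dim M" using C dim by (simp add: card_Diff_subset)
  then obtain v where v: "v \<in> M" "v \<noteq> 0" "\<And>i. i \<in> S - C \<Longrightarrow> inner v (f i) = 0"
    using exists_nonzero_vanishing_on[OF M finite] by blast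
  have "inner v (f i) * inner u (f i) = 0" for i
    using u v supp[OF v(1), of i] by (cases "i \<in> C"; cases "i \<in> S") auto
  with u v \<open>M \<subset> M'\<close> have "disjoint_support_pair f M'" unfolding disjoint_support_pair_def by blast
  then show False using PR' F_PR_subspace_iff[OF f M'] by blast
qed

lemma card_zeros_polyfun_le:
  fixes t :: "'i \<Rightarrow> real"
  assumes t: "inj_on t S" and nonzero: "c j \<noteq> 0" "j \<le> m"
  shows "card {i\<in>S. (\<Sum>l\<le>m. c l * t i ^ l) = 0} \<le> m"
proof -
  let ?R = "{z. (\<Sum>l\<le>m. c l * z ^ l) = 0}"
  have "\<exists>k\<le>m. c k \<noteq> 0" using nonzero by blast
  then have R: "finite ?R" "card ?R \<le> m" using polyfun_rootbound by auto
  have "inj_on t {i\<in>S. (\<Sum>l\<le>m. c l * t i ^ l) = 0}" using t by (auto simp: inj_on_def)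
  then have "card {i\<in>S. (\<Sum>l\<le>m. c l * t i ^ l) = 0} \<le> card ?R"
    by (rule card_inj_on_le) (auto simp: R(1))
  with R(2) show ?thesis by linarith
qed

lemma dim_span_image_eq_card:
  fixes X :: "'j \<Rightarrow> 'a::real_vector"
  assumes J: "finite J" and scalars_zero: "\<And>c. (\<Sum>j\<in>J. c j *\<^sub>R X j) = 0 \<Longrightarrow> \<forall>j\<in>J. c j = 0"
  shows "dim (span (X ` J)) = card J"
proof -
  have inj: "inj_on X J"
  proof (rule inj_onI, rule ccontr)
    fix a b assume ab: "a \<in> J" "b \<in> J" "X a = X b" "a \<noteq> b"
    let ?c = "\<lambda>j. (if j = a then 1 else 0) - (if j = b then 1 else (0::real))"
    have indicator_scale: "(if p then 1 else 0) *\<^sub>R v = (if p then v else 0)" for p and v :: 'a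
      by simp
    have "(\<Sum>j\<in>J. ?c j *\<^sub>R X j) = X a - X b"
      using ab J by (simp add: scaleR_diff_left sum_subtractf indicator_scale sum.delta)
    then have "\<forall>j\<in>J. ?c j = 0" using ab(3) by (intro scalars_zero) simp
    then have "?c a = 0" using ab(1) by blast
    then show False using ab(4) by simp
  qed
  have "independent (X ` J)"
  proof (rule independent_if_scalars_zero)
    fix u v assume sum: "(\<Sum>x\<in>X ` J. u x *\<^sub>R x) = 0" and v: "v \<in> X ` J"
    have "(\<Sum>j\<in>J. u (X j) *\<^sub>R X j) = 0" using sum by (simp add: sum.reindex[OF inj])
    then have "\<forall>j\<in>J. u (X j) = 0" by (rule scalars_zero)
    then show "u v = 0" using v by blast
  qed (use J in simp)
  then show ?thesis by (simp add: dim_eq_card_independent card_image[OF inj])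
qed

lemma exists_frame_coefficients:
  fixes f :: "'n::finite \<Rightarrow> real^'n"
  assumes f: "span (range f) = UNIV"
  obtains x where "\<And>i. inner x (f i) = c i"
proof -
  define T where "T x = (\<chi> i. inner x (f i))" for x :: "real^'n"
  have lin: "linear T" unfolding T_def by (auto simp: linear_iff vec_eq_iff inner_add_left)
  moreover have "inj T"
    using linear_injective_on_subspace_0[OF lin subspace_UNIV]
      orthogonal_spanning_family_eq_0[OF f] by (auto simp: T_def vec_eq_iff)
  ultimately have "surj T" using linear_injective_imp_surjective[of T] by simp
  then obtain x where "T x = (\<chi> i. c i)" by (metis surjD)
  then show ?thesis using that by (auto simp: T_def vec_eq_iff)
qed

text \<open>On S the frame coefficients of the vectors in span (X ` {..m}) are the values of polynomials
  of degree at most m at the distinct nodes t i, i.e. the codewords of a Reed-Solomon code.\<close>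

context
  fixes f :: "'i \<Rightarrow> 'a::euclidean_space" and S :: "'i set" and t :: "'i \<Rightarrow> real"
    and X :: "nat \<Rightarrow> 'a" and m :: nat
  assumes f: "span (range f) = UNIV" and t: "inj_on t S"
    and inner_X: "\<And>j i. inner (X j) (f i) = (if i \<in> S then t i ^ j else 0)"
begin

lemma inner_span_polynomial_vectors:
  assumes "x \<in> span (X ` {..m})"
  obtains c where "\<And>i. inner x (f i) = (if i \<in> S then \<Sum>j\<le>m. c j * t i ^ j else 0)"
proof -
  have "\<exists>c. \<forall>i. inner x (f i) = (if i \<in> S then \<Sum>j\<le>m. c j * t i ^ j else 0)"
    using assms
  proof (induction rule: span_induct_alt)
    case base
    show ?case by (rule exI[of _ "\<lambda>_. 0"]) simp
  next
    case (step a v y)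
    then obtain k c where k: "k \<le> m" "v = X k"
      and c: "\<forall>i. inner y (f i) = (if i \<in> S then \<Sum>j\<le>m. c j * t i ^ j else 0)" by blast
    have "(\<Sum>j\<le>m. (c j + (if j = k then a else 0)) * z ^ j) = a * z ^ k + (\<Sum>j\<le>m. c j * z ^ j)"
      for z :: real
      using k by (simp add: distrib_right sum.distrib if_distrib[of "\<lambda>r. r * _"])
    then show ?case using k c inner_X
      by (intro exI[of _ "\<lambda>j. c j + (if j = k then a else 0)"]) (simp add: inner_add_left)
  qed
  then show ?thesis using that by blast
qed

lemma card_zeros_span_polynomial_vectors_le:
  assumes x: "x \<in> span (X ` {..m})" "x \<noteq> 0"
  shows "card {i\<in>S. inner x (f i) = 0} \<le> m"
proof -
  obtain c where c: "\<And>i. inner x (f i) = (if i \<in> S then \<Sum>j\<le>m. c j * t i ^ j else 0)"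
    using inner_span_polynomial_vectors[OF x(1)] by blast
  have "\<exists>j\<le>m. c j \<noteq> 0"
  proof (rule ccontr)
    assume "\<not> (\<exists>j\<le>m. c j \<noteq> 0)"
    then have "inner x (f i) = 0" for i by (simp add: c)
    then show False using orthogonal_spanning_family_eq_0[OF f] x(2) by blast
  qed
  then obtain j where "c j \<noteq> 0" "j \<le> m" by blast
  from card_zeros_polyfun_le[of t S c, OF t this] show ?thesis by (simp add: c cong: conj_cong)
qed

lemma dim_span_polynomial_vectors:
  assumes "m < card S"
  shows "dim (span (X ` {..m})) = m + 1"
proof -
  have "\<forall>j\<le>m. c j = 0" if sum: "(\<Sum>j\<le>m. c j *\<^sub>R X j) = 0" for c
  proof (rule ccontr)
    assume "\<not> (\<forall>j\<le>m. c j = 0)"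
    then obtain j where "c j \<noteq> 0" "j \<le> m" by blast
    from card_zeros_polyfun_le[of t S c, OF t this] have "card {i\<in>S. (\<Sum>l\<le>m. c l * t i ^ l) = 0} \<le> m" .
    moreover have "(\<Sum>l\<le>m. c l * t i ^ l) = 0" if "i \<in> S" for i
      using arg_cong[OF sum, of "\<lambda>x. inner x (f i)"] that by (simp add: inner_sum_left inner_X)
    then have "{i\<in>S. (\<Sum>l\<le>m. c l * t i ^ l) = 0} = S" by blast
    ultimately show False using assms by simp
  qed
  then show ?thesis using dim_span_image_eq_card[of "{..m}" X] by simp
qed

end

lemma exists_maximal_F_PR_subspace:
  fixes f :: "'n::finite \<Rightarrow> real^'n"
  assumes f: "span (range f) = UNIV" and k: "1 \<le> k" "2 * k \<le> CARD('n) + 1"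
  obtains M where "maximal_F_PR_subspace f UNIV M" "dim M = k"
proof -
  define m where "m = k - 1"
  have card_UNIV: "2 * m + 1 \<le> card (UNIV :: 'n set)" using k by (simp add: m_def)
  obtain S :: "'n set" where card_S: "card S = 2 * m + 1"
    using obtain_subset_with_card_n[OF card_UNIV] by blast
  obtain g :: "'n \<Rightarrow> nat" where "inj g" using finite_imp_inj_to_nat_seg[of "UNIV :: 'n set"] by auto
  then have t: "inj_on (\<lambda>i. real (g i)) S" by (auto simp: inj_on_def dest: injD)
  have "\<exists>x. \<forall>i. inner x (f i) = (if i \<in> S then real (g i) ^ j else 0)" for j
    using exists_frame_coefficients[OF f, of "\<lambda>i. if i \<in> S then real (g i) ^ j else 0"] by blast
  then obtain X where X: "\<And>j i. inner (X j) (f i) = (if i \<in> S then real (g i) ^ j else 0)"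
    using choice[of "\<lambda>j x. \<forall>i. inner x (f i) = (if i \<in> S then real (g i) ^ j else 0)"] by blast
  define M where "M = span (X ` {..m})"
  have M: "subspace M" by (simp add: M_def)
  have dim: "dim M = m + 1"
    unfolding M_def by (rule dim_span_polynomial_vectors[OF f t X]) (simp add: card_S)
  have "\<not> disjoint_support_pair f M"
  proof (rule not_disjoint_support_pair_if_few_zeros)
    fix x assume "x \<in> M" "x \<noteq> 0"
    then have "card {i\<in>S. inner x (f i) = 0} \<le> m"
      unfolding M_def by (rule card_zeros_span_polynomial_vectors_le[OF f t X])
    then show "2 * card {i\<in>S. inner x (f i) = 0} < card S" using card_S by linarith
  qed
  then have PR: "F_PR_subspace f UNIV M" using F_PR_subspace_iff[OF f M] by blast
  have "inner x (f i) = 0" if "x \<in> M" "i \<notin> S" for x i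
  proof -
    obtain c where "\<And>i. inner x (f i) = (if i \<in> S then \<Sum>j\<le>m. c j * real (g i) ^ j else 0)"
      using inner_span_polynomial_vectors[OF f t X] \<open>x \<in> M\<close> unfolding M_def by blast
    with \<open>i \<notin> S\<close> show ?thesis by simp
  qed
  moreover have "dim M \<le> card S" "card S < 2 * dim M" using dim card_S by simp_all
  ultimately have "maximal_F_PR_subspace f UNIV M"
    by (rule maximal_F_PR_subspace_if_supported_on[OF f PR])
  moreover have "dim M = k" using dim k by (simp add: m_def)
  ultimately show ?thesis by (rule that)
qed

theorem proposition3p1:
  fixes f :: "'n::finite \<Rightarrow> real^'n" and k :: nat
  assumes "inj f" and "independent (range f)" and "span (range f) = UNIV"
    and "k > 0"
  shows "(\<exists>M. maximal_F_PR_subspace f UNIV M \<and> dim M = k) \<longleftrightarrow>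
           1 \<le> k \<and> k \<le> (CARD('n) + 1) div 2"
proof
  assume "\<exists>M. maximal_F_PR_subspace f UNIV M \<and> dim M = k"
  then obtain M where "maximal_F_PR_subspace f UNIV M" and "dim M = k" by blast
  then have M: "subspace M" and PR: "F_PR_subspace f UNIV M"
    by (simp_all add: maximal_F_PR_subspace_def F_PR_subspace_def)
  with F_PR_subspace_iff[OF assms(3) M] have "\<not> disjoint_support_pair f M" by blast
  from dim_le_if_not_disjoint_support_pair[OF M this] \<open>dim M = k\<close> \<open>k > 0\<close>
  show "1 \<le> k \<and> k \<le> (CARD('n) + 1) div 2" by linarith
next
  assume "1 \<le> k \<and> k \<le> (CARD('n) + 1) div 2"
  then have "1 \<le> k" "2 * k \<le> CARD('n) + 1" by linarith+
  from exists_maximal_F_PR_subspace[OF assms(3) this] show "\<exists>M. maximal_F_PR_subspace f UNIV M \<and> dim M = k"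
    by blast
qed

end
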